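(* Let $m,n\in\mathbb{N}$. For $1\le\ell\le m$ let $r_{\ell},s_{\ell}\in\mathbb{N}_{0}$, $q_{\ell}=e^{-2\pi\sigma_{\ell}}$, $p_{\ell}=e^{-2\pi\tau_{\ell}}$ with $\sigma_{\ell},\tau_{\ell}>0$, let $c_{1,\ell},\dots,c_{r_{\ell},\ell},d_{1,\ell},\dots,d_{s_{\ell},\ell}\in\mathbb{C}$ and a complex sequence $(B_{N,\ell})_{N\in\mathbb{Z}}$ be such that \[ \frac{(c_{1,\ell},\dots,c_{r_{\ell},\ell};q_{\ell},p_{\ell})_{N}}{(d_{1,\ell},\dots,d_{s_{\ell},\ell};q_{\ell},p_{\ell})_{N}}B_{N,\ell}\ge0\quad\text{for all }N\in\mathbb{Z}, \] and let $T_{\ell}\subset\mathbb{C}$ be an open set, symmetric under complex conjugation, such that the series ${}_{r_\ell}G_{s_\ell}$ below converges at $z\overline{w}$ for all $z,w\in T_\ell$. Let $w_{j,\ell}\in T_{\ell}$ for $1\le j\le n$, $1\le\ell\le m$. Then the $n\times n$ matrix \[ \left(\prod_{\ell=1}^{m}{}_{r_{\ell}}G_{s_{\ell}}\left(c_{1,\ell},\dots,c_{r_{\ell},\ell};\,d_{1,\ell},\dots,d_{s_{\ell},\ell};\,q_{\ell},p_{\ell};\,B_{\ell},\,w_{j,\ell}\overline{w_{k,\ell}}\right)\right)_{j,k=1}^{n} \] is positive semidefinite.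
   Context: For $0<p<1$: $(x;p)_\infty=\prod_{k\ge0}(1-xp^k)$, $\theta(x;p)=(x;p)_\infty(p/x;p)_\infty$. The elliptic shifted factorial is $(a;q,p)_N=\prod_{k=0}^{N-1}\theta(aq^{k};p)$ for $N\in\mathbb{N}$, $(a;q,p)_0=1$, $(a;q,p)_N=1/\prod_{k=0}^{-N-1}\theta(aq^{N+k};p)$ for $-N\in\mathbb{N}$, and $(a_1,\dots,a_r;q,p)_N=\prod_i(a_i;q,p)_N$. The bilateral modular series is \[ {}_{r}G_{s}(c_{1},\dots,c_{r};\,d_{1},\dots,d_{s};\,q,p;\,B,\,z)=\sum_{N=-\infty}^{\infty}\frac{(c_{1},\dots,c_{r};q,p)_{N}}{(d_{1},\dots,d_{s};q,p)_{N}}B_{N}z^{N} \] for a sequence $B=(B_N)_{N\in\mathbb{Z}}$. A complex matrix $M=(m_{j,k})$ is positive semidefinite if $\sum_{j,k}m_{j,k}u_j\overline{u_k}\ge0$ for all complex $u_j$. *)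

theory Defs
  imports "HOL-Analysis.Analysis"
begin

definition qpoch_inf :: "complex \<Rightarrow> complex \<Rightarrow> complex" where
  "qpoch_inf x p = (\<Prod>k. 1 - x * p ^ k)"

definition theta :: "complex \<Rightarrow> complex \<Rightarrow> complex" where
  "theta x p = qpoch_inf x p * qpoch_inf (p / x) p"

definition ell_fact :: "complex \<Rightarrow> complex \<Rightarrow> complex \<Rightarrow> int \<Rightarrow> complex" where
  "ell_fact a q p N =
     (if N \<ge> 0 then (\<Prod>k<nat N. theta (a * q ^ k) p)
      else 1 / (\<Prod>k<nat (- N). theta (a * q powi (N + int k)) p))"

definition ell_fact_list :: "complex list \<Rightarrow> complex \<Rightarrow> complex \<Rightarrow> int \<Rightarrow> complex" where
  "ell_fact_list as q p N = (\<Prod>a\<leftarrow>as. ell_fact a q p N)"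

definition G_coeff :: "complex list \<Rightarrow> complex list \<Rightarrow> complex \<Rightarrow> complex \<Rightarrow> (int \<Rightarrow> complex) \<Rightarrow> int \<Rightarrow> complex" where
  "G_coeff cs ds q p B N = ell_fact_list cs q p N / ell_fact_list ds q p N * B N"

definition G_term :: "complex list \<Rightarrow> complex list \<Rightarrow> complex \<Rightarrow> complex \<Rightarrow> (int \<Rightarrow> complex) \<Rightarrow> complex \<Rightarrow> int \<Rightarrow> complex" where
  "G_term cs ds q p B z N = G_coeff cs ds q p B N * z powi N"

definition bilateral_converges :: "(int \<Rightarrow> complex) \<Rightarrow> bool" where
  "bilateral_converges a \<longleftrightarrow> summable (\<lambda>n. a (int n)) \<and> summable (\<lambda>n. a (- int n - 1))"

definition bilateral_sum :: "(int \<Rightarrow> complex) \<Rightarrow> complex" where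
  "bilateral_sum a = (\<Sum>n. a (int n)) + (\<Sum>n. a (- int n - 1))"

definition G_series :: "complex list \<Rightarrow> complex list \<Rightarrow> complex \<Rightarrow> complex \<Rightarrow> (int \<Rightarrow> complex) \<Rightarrow> complex \<Rightarrow> complex" where
  "G_series cs ds q p B z = bilateral_sum (G_term cs ds q p B z)"

definition G_converges :: "complex list \<Rightarrow> complex list \<Rightarrow> complex \<Rightarrow> complex \<Rightarrow> (int \<Rightarrow> complex) \<Rightarrow> complex \<Rightarrow> bool" where
  "G_converges cs ds q p B z = bilateral_converges (G_term cs ds q p B z)"

text \<open>Positive semidefinite n x n complex matrix (indices 0..n-1).\<close>
definition psd_matrix :: "nat \<Rightarrow> (nat \<Rightarrow> nat \<Rightarrow> complex) \<Rightarrow> bool" where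
  "psd_matrix n M \<longleftrightarrow>
     (\<forall>u :: nat \<Rightarrow> complex. (\<Sum>j<n. \<Sum>k<n. M j k * u j * cnj (u k)) \<ge> 0)"

end

theory Submission
  imports Defs
begin

text \<open>
  Truncating the bilateral series at \<open>|N| \<le> M\<close> and putting \<open>z = w\<^sub>j conj(w\<^sub>k)\<close>, the truncation
  is the matrix \<open>\<Sum>\<^sub>N a\<^sub>N w\<^sub>j\<^sup>N conj(w\<^sub>k\<^sup>N)\<close> with \<open>a\<^sub>N \<ge> 0\<close>: a nonnegative combination of rank-one
  Hermitian matrices. These combinations form a cone closed under entrywise products (a
  finite form of the Schur product theorem), so the entrywise product over \<open>\<ell>\<close> of the
  truncations is positive semidefinite, and so is its entrywise limit, the matrix of the
  theorem. Only the nonnegativity of the coefficients and the convergence of the series at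
  the points \<open>w\<^sub>j conj(w\<^sub>k)\<close> are used.
\<close>

inductive gram_cone :: "(nat \<Rightarrow> nat \<Rightarrow> complex) \<Rightarrow> bool" where
  zero: "gram_cone (\<lambda>j k. 0)"
| rank_one: "c \<ge> 0 \<Longrightarrow> gram_cone (\<lambda>j k. of_real c * f j * cnj (f k))"
| add: "gram_cone K1 \<Longrightarrow> gram_cone K2 \<Longrightarrow> gram_cone (\<lambda>j k. K1 j k + K2 j k)"

lemma psd_matrix_rank_one:
  assumes "c \<ge> 0"
  shows "psd_matrix n (\<lambda>j k. of_real c * f j * cnj (f k))"
  unfolding psd_matrix_def
proof
  fix u :: "nat \<Rightarrow> complex"
  define s where "s = (\<Sum>j<n. f j * u j)"
  have "(\<Sum>j<n. \<Sum>k<n. of_real c * f j * cnj (f k) * u j * cnj (u k)) = of_real c * (s * cnj s)"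
    unfolding s_def by (simp add: sum_distrib_left sum_distrib_right mult_ac; subst sum.swap; simp)
  also have "\<dots> = of_real (c * (norm s)\<^sup>2)"
    using complex_norm_square[of s] by simp
  also have "\<dots> \<ge> 0"
    using assms by (simp add: less_eq_complex_def)
  finally show "(\<Sum>j<n. \<Sum>k<n. of_real c * f j * cnj (f k) * u j * cnj (u k)) \<ge> 0" .
qed

lemma psd_matrix_add:
  "psd_matrix n K1 \<Longrightarrow> psd_matrix n K2 \<Longrightarrow> psd_matrix n (\<lambda>j k. K1 j k + K2 j k)"
  unfolding psd_matrix_def by (simp add: distrib_right sum.distrib add_nonneg_nonneg)

lemma gram_cone_psd_matrix: "gram_cone K \<Longrightarrow> psd_matrix n K"
proof (induction rule: gram_cone.induct)
  case zero
  show ?case by (simp add: psd_matrix_def)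
next
  case (rank_one c f)
  then show ?case by (rule psd_matrix_rank_one)
next
  case (add K1 K2)
  then show ?case by (intro psd_matrix_add)
qed

lemma gram_cone_mult_rank_one:
  assumes "gram_cone K" "c \<ge> 0"
  shows "gram_cone (\<lambda>j k. (of_real c * f j * cnj (f k)) * K j k)"
  using assms(1)
proof (induction rule: gram_cone.induct)
  case zero
  then show ?case by (simp add: gram_cone.zero)
next
  case (rank_one c' g)
  have "gram_cone (\<lambda>j k. of_real (c * c') * (f j * g j) * cnj (f k * g k))"
    using rank_one assms(2) by (intro gram_cone.rank_one) simp
  then show ?case by (simp add: mult_ac)
next
  case (add K1 K2)
  from gram_cone.add[OF add.IH] show ?case by (simp add: distrib_left)
qed

lemma gram_cone_mult:
  "gram_cone K1 \<Longrightarrow> gram_cone K2 \<Longrightarrow> gram_cone (\<lambda>j k. K1 j k * K2 j k)"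
proof (induction rule: gram_cone.induct)
  case zero
  then show ?case by (simp add: gram_cone.zero)
next
  case (rank_one c f)
  then show ?case by (intro gram_cone_mult_rank_one)
next
  case (add K1 K2)
  from gram_cone.add[OF add.IH[OF add.prems]] show ?case by (simp add: distrib_right)
qed

lemma gram_cone_one: "gram_cone (\<lambda>j k. 1)"
  using gram_cone.rank_one[of 1 "\<lambda>_. 1"] by simp

lemma gram_cone_prod:
  "finite L \<Longrightarrow> (\<And>l. l \<in> L \<Longrightarrow> gram_cone (K l)) \<Longrightarrow> gram_cone (\<lambda>j k. \<Prod>l\<in>L. K l j k)"
proof (induction L rule: finite_induct)
  case empty
  then show ?case by (simp add: gram_cone_one)
next
  case (insert x F)
  then show ?case using gram_cone_mult[of "K x" "\<lambda>j k. \<Prod>l\<in>F. K l j k"] by simp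
qed

lemma gram_cone_sum:
  "finite L \<Longrightarrow> (\<And>l. l \<in> L \<Longrightarrow> gram_cone (K l)) \<Longrightarrow> gram_cone (\<lambda>j k. \<Sum>l\<in>L. K l j k)"
proof (induction L rule: finite_induct)
  case empty
  then show ?case by (simp add: gram_cone.zero)
next
  case (insert x F)
  then show ?case using gram_cone.add[of "K x" "\<lambda>j k. \<Sum>l\<in>F. K l j k"] by simp
qed

lemma gram_cone_power_int_term:
  assumes "a \<ge> 0"
  shows "gram_cone (\<lambda>j k. a * (x j * cnj (x k)) powi N)"
proof -
  have a: "a = of_real (Re a)"
    using assms by (simp add: less_eq_complex_def complex_eq_iff)
  have "gram_cone (\<lambda>j k. of_real (Re a) * x j powi N * cnj (x k powi N))"
    using assms by (intro gram_cone.rank_one) (simp add: less_eq_complex_def)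
  then show ?thesis
    by (subst a) (simp add: power_int_mult_distrib mult_ac)
qed

definition bilateral_partial_sum :: "(int \<Rightarrow> complex) \<Rightarrow> nat \<Rightarrow> complex" where
  "bilateral_partial_sum a M = (\<Sum>i<M. a (int i)) + (\<Sum>i<M. a (- int i - 1))"

lemma bilateral_partial_sum_LIMSEQ:
  "bilateral_converges a \<Longrightarrow> bilateral_partial_sum a \<longlonglongrightarrow> bilateral_sum a"
  unfolding bilateral_converges_def bilateral_partial_sum_def bilateral_sum_def
  by (intro tendsto_add summable_LIMSEQ) auto

lemma gram_cone_bilateral_partial_sum:
  assumes "\<And>N. a N \<ge> 0"
  shows "gram_cone (\<lambda>j k. bilateral_partial_sum (\<lambda>N. a N * (x j * cnj (x k)) powi N) M)"
  unfolding bilateral_partial_sum_def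
  using assms by (intro gram_cone.add gram_cone_sum gram_cone_power_int_term) auto

lemma nonneg_complex_iff_nonneg_Reals: "0 \<le> z \<longleftrightarrow> z \<in> (\<real>\<^sub>\<ge>\<^sub>0 :: complex set)"
  by (simp add: complex_nonneg_Reals_iff less_eq_complex_def)

lemma psd_matrix_LIMSEQ:
  assumes "\<And>j k. j < n \<Longrightarrow> k < n \<Longrightarrow> (\<lambda>M. K M j k) \<longlonglongrightarrow> L j k"
    and "\<And>M. psd_matrix n (K M)"
  shows "psd_matrix n L"
  unfolding psd_matrix_def nonneg_complex_iff_nonneg_Reals
proof
  fix u :: "nat \<Rightarrow> complex"
  have "(\<Sum>j<n. \<Sum>k<n. K M j k * u j * cnj (u k)) \<in> \<real>\<^sub>\<ge>\<^sub>0" for M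
    using assms(2) unfolding psd_matrix_def nonneg_complex_iff_nonneg_Reals by blast
  moreover have "(\<lambda>M. \<Sum>j<n. \<Sum>k<n. K M j k * u j * cnj (u k)) \<longlonglongrightarrow> (\<Sum>j<n. \<Sum>k<n. L j k * u j * cnj (u k))"
    using assms(1) by (intro tendsto_sum tendsto_mult tendsto_const) auto
  ultimately show "(\<Sum>j<n. \<Sum>k<n. L j k * u j * cnj (u k)) \<in> \<real>\<^sub>\<ge>\<^sub>0"
    by (rule closed_sequentially[OF closed_nonneg_Reals_complex])
qed

lemma psd_matrix_prod_bilateral_sum:
  fixes a :: "'l \<Rightarrow> int \<Rightarrow> complex" and x :: "'l \<Rightarrow> nat \<Rightarrow> complex"
  assumes "finite L"
    and "\<And>l N. l \<in> L \<Longrightarrow> a l N \<ge> 0"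
    and "\<And>l j k. l \<in> L \<Longrightarrow> j < n \<Longrightarrow> k < n \<Longrightarrow>
           bilateral_converges (\<lambda>N. a l N * (x l j * cnj (x l k)) powi N)"
  shows "psd_matrix n (\<lambda>j k. \<Prod>l\<in>L. bilateral_sum (\<lambda>N. a l N * (x l j * cnj (x l k)) powi N))"
proof -
  define P where "P M j k = (\<Prod>l\<in>L. bilateral_partial_sum (\<lambda>N. a l N * (x l j * cnj (x l k)) powi N) M)"
    for M j k
  have cone: "gram_cone (P M)" for M
    unfolding P_def
    by (rule gram_cone_prod[OF assms(1)], rule gram_cone_bilateral_partial_sum) (simp add: assms(2))
  have limit: "(\<lambda>M. P M j k) \<longlonglongrightarrow> (\<Prod>l\<in>L. bilateral_sum (\<lambda>N. a l N * (x l j * cnj (x l k)) powi N))"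
    if "j < n" "k < n" for j k
    unfolding P_def
    by (rule tendsto_prod, rule bilateral_partial_sum_LIMSEQ) (simp add: assms(3) that)
  show ?thesis
    using limit gram_cone_psd_matrix[OF cone] by (rule psd_matrix_LIMSEQ)
qed

theorem mainTheorem17:
  fixes m n :: nat
    and \<sigma> \<tau> :: "nat \<Rightarrow> real"
    and c d :: "nat \<Rightarrow> complex list"
    and B :: "nat \<Rightarrow> int \<Rightarrow> complex"
    and T :: "nat \<Rightarrow> complex set"
    and w :: "nat \<Rightarrow> nat \<Rightarrow> complex"
  assumes "m \<ge> 1" and "n \<ge> 1"
    and "\<And>l. l \<in> {1..m} \<Longrightarrow> \<sigma> l > 0 \<and> \<tau> l > 0"
    and "\<And>l N. l \<in> {1..m} \<Longrightarrow>
           G_coeff (c l) (d l) (exp (- 2 * pi * \<sigma> l)) (exp (- 2 * pi * \<tau> l)) (B l) N \<ge> 0"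
    and "\<And>l. l \<in> {1..m} \<Longrightarrow> open (T l)"
    and "\<And>l. l \<in> {1..m} \<Longrightarrow> cnj ` T l = T l"
    and "\<And>l z v. l \<in> {1..m} \<Longrightarrow> z \<in> T l \<Longrightarrow> v \<in> T l \<Longrightarrow>
           G_converges (c l) (d l) (exp (- 2 * pi * \<sigma> l)) (exp (- 2 * pi * \<tau> l)) (B l) (z * cnj v)"
    and "\<And>j l. j \<in> {1..n} \<Longrightarrow> l \<in> {1..m} \<Longrightarrow> w j l \<in> T l"
  shows "psd_matrix n (\<lambda>j k. \<Prod>l\<in>{1..m}.
           G_series (c l) (d l) (exp (- 2 * pi * \<sigma> l)) (exp (- 2 * pi * \<tau> l)) (B l)
             (w (Suc j) l * cnj (w (Suc k) l)))"
  unfolding G_series_def G_term_def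
  by (rule psd_matrix_prod_bilateral_sum)
     (simp, fact assms(4), rule assms(7)[unfolded G_converges_def G_term_def], auto intro: assms(8))

end
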